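(* Let $A,A^*\in\mathrm{End}(\mathcal V)$ satisfy the Askey–Wilson relations $$[A,[A,A^*]_q]_{q^{-1}}=\rho A^*+\omega A+\eta\,\mathbb I,\qquad [A^*,[A^*,A]_q]_{q^{-1}}=\rho A+\omega A^*+\eta^*\,\mathbb I$$ with structure constants $$\rho=-\frac{(q^2-q^{-2})^2}{r_0^2},\quad \omega=\omega^{\{\cdot,*,\diamond\}},\quad \eta=\frac{q+q^{-1}}{r_0}\,\omega^{\{\cdot,\diamond,*\}},\quad \eta^*=\frac{q+q^{-1}}{r_0}\,\omega^{\{*,\diamond,\cdot\}}.$$ Let $A^\diamond$ be defined as below. Then for every ordered pair $(a,b)$ of distinct labels in $\{\cdot,*,\diamond\}$, with $c$ the remaining label, $$[A^a,[A^a,A^b]_q]_{q^{-1}}=-\frac{(q^2-q^{-2})^2}{r_0^2}A^b+\omega^{\{a,b,c\}}A^a+\frac{q+q^{-1}}{r_0}\,\omega^{\{a,c,b\}}\,\mathbb I .$$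
   Context: $q\in\mathbb C^*$ is not a root of unity, $s\in\{0,\tfrac12,1,\tfrac32,\dots\}$, and $\mathcal V$ is a complex vector space of dimension $2s+1$ with identity $\mathbb I$. Notation: $[X,Y]_q=qXY-q^{-1}YX$. Labels $a$ range over $\{\cdot,*,\diamond\}$; we write $A^{\cdot}=A$, $\mathsf b^{\cdot}=\mathsf b$, $\mathsf c^{\cdot}=\mathsf c$. Fix nonzero complex numbers $r_0$, $\mathsf b^a,\mathsf c^a$ ($a\in\{\cdot,*,\diamond\}$) with $r_0^{-2}=\mathsf b\mathsf c=\mathsf b^*\mathsf c^*=\mathsf b^\diamond\mathsf c^\diamond$. Put $\theta^a_M=\mathsf b^aq^{2M}+\mathsf c^aq^{-2M}$ (so $\theta^a_s=\mathsf b^aq^{2s}+\mathsf c^aq^{-2s}$), and for pairwise distinct labels $a,b,c$, $\omega^{\{a,b,c\}}=-(q-q^{-1})^2\big(\theta^a_s\theta^b_s-r_0^{-1}(q^{2s+1}+q^{-2s-1})\theta^c_s\big)$. Define $A^\diamond=\frac{r_0}{q^2-q^{-2}}[A^*,A]_q+\frac{r_0\,\omega^{\{\cdot,*,\diamond\}}}{(q-q^{-1})(q^2-q^{-2})}\mathbb I$. *)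

theory Defs
  imports "Jordan_Normal_Form.Matrix"
begin

datatype label = Dot | Star | Diamond

definition qcomm :: "complex \<Rightarrow> complex mat \<Rightarrow> complex mat \<Rightarrow> complex mat" where
  "qcomm q X Y = q \<cdot>\<^sub>m (X * Y) - inverse q \<cdot>\<^sub>m (Y * X)"

text \<open>theta^a_s = b^a q^{2s} + c^a q^{-2s}; the half-integer s is encoded by n = 2s.\<close>
definition theta_s :: "complex \<Rightarrow> nat \<Rightarrow> (label \<Rightarrow> complex) \<Rightarrow> (label \<Rightarrow> complex) \<Rightarrow> label \<Rightarrow> complex" where
  "theta_s q n bb cc a = bb a * q ^ n + cc a * inverse q ^ n"

definition omega :: "complex \<Rightarrow> complex \<Rightarrow> nat \<Rightarrow> (label \<Rightarrow> complex) \<Rightarrow> (label \<Rightarrow> complex)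
    \<Rightarrow> label \<Rightarrow> label \<Rightarrow> label \<Rightarrow> complex" where
  "omega q r0 n bb cc a b c =
     - ((q - inverse q)^2) * (theta_s q n bb cc a * theta_s q n bb cc b
        - inverse r0 * (q ^ (n+1) + inverse q ^ (n+1)) * theta_s q n bb cc c)"

definition Adiamond :: "complex \<Rightarrow> complex \<Rightarrow> nat \<Rightarrow> (label \<Rightarrow> complex) \<Rightarrow> (label \<Rightarrow> complex)
    \<Rightarrow> complex mat \<Rightarrow> complex mat \<Rightarrow> complex mat" where
  "Adiamond q r0 n bb cc A As =
     (r0 / (q^2 - inverse q ^ 2)) \<cdot>\<^sub>m qcomm q As A
     + (r0 * omega q r0 n bb cc Dot Star Diamond / ((q - inverse q) * (q^2 - inverse q ^ 2)))
       \<cdot>\<^sub>m 1\<^sub>m (n+1)"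

definition Alab :: "complex \<Rightarrow> complex \<Rightarrow> nat \<Rightarrow> (label \<Rightarrow> complex) \<Rightarrow> (label \<Rightarrow> complex)
    \<Rightarrow> complex mat \<Rightarrow> complex mat \<Rightarrow> label \<Rightarrow> complex mat" where
  "Alab q r0 n bb cc A As a =
     (case a of Dot \<Rightarrow> A | Star \<Rightarrow> As | Diamond \<Rightarrow> Adiamond q r0 n bb cc A As)"

end

theory Submission
  imports Defs
begin

(* With kappa = (q^2 - q^-2)/r0 and eps = q - q^-1, the definition of A^dia says
     [A^*, A]_q = kappa A^dia - (omega^{.,*,dia}/eps) I,
   and the two given Askey-Wilson relations turn into the two relations obtained from this
   one by cyclically permuting (A^*, A, A^dia):
     [A, A^dia]_q = kappa A^* - (omega^{.,dia,*}/eps) I,   [A^dia, A^*]_q = kappa A - (omega^{*,dia,.}/eps) I.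
   Conversely, substituting one such relation into another one sharing an operator X
   gives [X, [X, Y]_q]_q^-1 as an Askey-Wilson relation; this yields all six relations,
   since omega^{a,b,c} is symmetric in a and b. *)

declare minus_carrier_mat [simp]

context
  fixes m :: nat
begin

private abbreviation (input) square_mats :: "complex mat set" where "square_mats \<equiv> carrier_mat m m"

lemma square_mat_mult_simps:
  "X \<in> square_mats \<Longrightarrow> Y \<in> square_mats \<Longrightarrow> Z \<in> square_mats \<Longrightarrow> (X + Y) * Z = X * Z + Y * Z"
  "X \<in> square_mats \<Longrightarrow> Y \<in> square_mats \<Longrightarrow> Z \<in> square_mats \<Longrightarrow> Z * (X + Y) = Z * X + Z * Y"
  "X \<in> square_mats \<Longrightarrow> Y \<in> square_mats \<Longrightarrow> Z \<in> square_mats \<Longrightarrow> (X - Y) * Z = X * Z - Y * Z"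
  "X \<in> square_mats \<Longrightarrow> Y \<in> square_mats \<Longrightarrow> Z \<in> square_mats \<Longrightarrow> Z * (X - Y) = Z * X - Z * Y"
  "X \<in> square_mats \<Longrightarrow> Y \<in> square_mats \<Longrightarrow> (c \<cdot>\<^sub>m X) * Y = c \<cdot>\<^sub>m (X * Y)"
  "X \<in> square_mats \<Longrightarrow> Y \<in> square_mats \<Longrightarrow> X * (c \<cdot>\<^sub>m Y) = c \<cdot>\<^sub>m (X * Y)"
  "X \<in> square_mats \<Longrightarrow> Y \<in> square_mats \<Longrightarrow> Z \<in> square_mats \<Longrightarrow> (X * Y) * Z = X * (Y * Z)"
  "X \<in> square_mats \<Longrightarrow> 1\<^sub>m m * X = X"
  "X \<in> square_mats \<Longrightarrow> X * 1\<^sub>m m = X"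
  by (auto simp: add_mult_distrib_mat mult_add_distrib_mat minus_mult_distrib_mat
      mult_minus_distrib_mat mult_smult_assoc_mat mult_smult_distrib)

lemma square_mat_entries:
  "X \<in> square_mats \<Longrightarrow> Y \<in> square_mats \<Longrightarrow> i < m \<Longrightarrow> j < m \<Longrightarrow> (X + Y) $$ (i,j) = X $$ (i,j) + Y $$ (i,j)"
  "X \<in> square_mats \<Longrightarrow> Y \<in> square_mats \<Longrightarrow> i < m \<Longrightarrow> j < m \<Longrightarrow> (X - Y) $$ (i,j) = X $$ (i,j) - Y $$ (i,j)"
  "X \<in> square_mats \<Longrightarrow> i < m \<Longrightarrow> j < m \<Longrightarrow> (c \<cdot>\<^sub>m X) $$ (i,j) = c * X $$ (i,j)"
  "X \<in> square_mats \<Longrightarrow> i < m \<Longrightarrow> j < m \<Longrightarrow> (- X) $$ (i,j) = - X $$ (i,j)"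
  by auto

lemma square_mat_eqI:
  "X \<in> square_mats \<Longrightarrow> Y \<in> square_mats \<Longrightarrow> (\<And>i j. i < m \<Longrightarrow> j < m \<Longrightarrow> X $$ (i,j) = Y $$ (i,j)) \<Longrightarrow> X = Y"
  by (rule eq_matI) auto

lemma qcomm_carrier [simp]: "X \<in> square_mats \<Longrightarrow> Y \<in> square_mats \<Longrightarrow> qcomm p X Y \<in> square_mats"
  unfolding qcomm_def by auto

lemma qcomm_inverse:
  assumes "X \<in> square_mats" "Y \<in> square_mats"
  shows "qcomm (inverse q) X Y = - qcomm q Y X"
  unfolding qcomm_def using assms
  by (intro square_mat_eqI) (simp_all add: square_mat_entries del: index_mult_mat)

lemma qcomm_right_affine:
  assumes "X \<in> square_mats" "Y \<in> square_mats"
  shows "qcomm p X (c \<cdot>\<^sub>m Y + d \<cdot>\<^sub>m 1\<^sub>m m) = c \<cdot>\<^sub>m qcomm p X Y + (d * (p - inverse p)) \<cdot>\<^sub>m X"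
  unfolding qcomm_def using assms
  by (simp add: square_mat_mult_simps, intro square_mat_eqI)
     (simp_all add: square_mat_entries algebra_simps del: index_mult_mat)

lemma qcomm_left_affine:
  assumes "X \<in> square_mats" "Y \<in> square_mats"
  shows "qcomm p (c \<cdot>\<^sub>m Y + d \<cdot>\<^sub>m 1\<^sub>m m) X = c \<cdot>\<^sub>m qcomm p Y X + (d * (p - inverse p)) \<cdot>\<^sub>m X"
  unfolding qcomm_def using assms
  by (simp add: square_mat_mult_simps, intro square_mat_eqI)
     (simp_all add: square_mat_entries algebra_simps del: index_mult_mat)

lemma qcomm_nested_swap:
  assumes "X \<in> square_mats" "Y \<in> square_mats" "q \<noteq> 0"
  shows "qcomm q X (qcomm q Y X) = - qcomm (inverse q) X (qcomm q X Y)"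
  unfolding qcomm_def using assms
  by (simp add: square_mat_mult_simps, intro square_mat_eqI)
     (simp_all add: square_mat_entries field_simps del: index_mult_mat)

lemma askey_wilson_of_qcomm:
  assumes X: "X \<in> square_mats" and Y: "Y \<in> square_mats" and Z: "Z \<in> square_mats"
    and eps: "q - inverse q = \<epsilon>" "\<epsilon> \<noteq> 0" and rho: "\<rho> = - (\<kappa> ^ 2)" and tau: "\<tau> * \<epsilon> = \<kappa>"
    and XY: "qcomm q X Y = \<kappa> \<cdot>\<^sub>m Z + (- wZ / \<epsilon>) \<cdot>\<^sub>m 1\<^sub>m m"
    and ZX: "qcomm q Z X = \<kappa> \<cdot>\<^sub>m Y + (- wY / \<epsilon>) \<cdot>\<^sub>m 1\<^sub>m m"
  shows "qcomm (inverse q) X (qcomm q X Y) = \<rho> \<cdot>\<^sub>m Y + wZ \<cdot>\<^sub>m X + (\<tau> * wY) \<cdot>\<^sub>m 1\<^sub>m m"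
proof -
  have "qcomm (inverse q) X (qcomm q X Y) = \<kappa> \<cdot>\<^sub>m qcomm (inverse q) X Z + wZ \<cdot>\<^sub>m X"
  proof -
    have "inverse q - q = - \<epsilon>"
      using eps(1) by auto
    then show ?thesis
      using X Z eps(2) by (simp add: XY qcomm_right_affine)
  qed
  also have "\<dots> = \<kappa> \<cdot>\<^sub>m (- (\<kappa> \<cdot>\<^sub>m Y + (- wY / \<epsilon>) \<cdot>\<^sub>m 1\<^sub>m m)) + wZ \<cdot>\<^sub>m X"
    by (simp only: qcomm_inverse[OF X Z] ZX)
  also have "\<dots> = \<rho> \<cdot>\<^sub>m Y + wZ \<cdot>\<^sub>m X + (\<tau> * wY) \<cdot>\<^sub>m 1\<^sub>m m"
    using X Y eps by (intro square_mat_eqI)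
      (simp_all add: square_mat_entries rho tau[symmetric] field_simps power2_eq_square)
  finally show ?thesis .
qed

lemma askey_wilson_of_reversed_qcomm:
  assumes X: "X \<in> square_mats" and Y: "Y \<in> square_mats" and Z: "Z \<in> square_mats" and q: "q \<noteq> 0"
    and eps: "q - inverse q = \<epsilon>" "\<epsilon> \<noteq> 0" and rho: "\<rho> = - (\<kappa> ^ 2)" and tau: "\<tau> * \<epsilon> = \<kappa>"
    and YX: "qcomm q Y X = \<kappa> \<cdot>\<^sub>m Z + (- wZ / \<epsilon>) \<cdot>\<^sub>m 1\<^sub>m m"
    and XZ: "qcomm q X Z = \<kappa> \<cdot>\<^sub>m Y + (- wY / \<epsilon>) \<cdot>\<^sub>m 1\<^sub>m m"
  shows "qcomm (inverse q) X (qcomm q X Y) = \<rho> \<cdot>\<^sub>m Y + wZ \<cdot>\<^sub>m X + (\<tau> * wY) \<cdot>\<^sub>m 1\<^sub>m m"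
proof -
  have "qcomm (inverse q) X (qcomm q X Y) = - qcomm q X (qcomm q Y X)"
    using X Y by (intro square_mat_eqI) (simp_all add: qcomm_nested_swap[OF X Y q] square_mat_entries)
  also have "\<dots> = - (\<kappa> \<cdot>\<^sub>m qcomm q X Z + (- wZ) \<cdot>\<^sub>m X)"
    using X Z eps by (simp add: YX qcomm_right_affine)
  also have "\<dots> = - (\<kappa> \<cdot>\<^sub>m (\<kappa> \<cdot>\<^sub>m Y + (- wY / \<epsilon>) \<cdot>\<^sub>m 1\<^sub>m m) + (- wZ) \<cdot>\<^sub>m X)"
    by (simp only: XZ)
  also have "\<dots> = \<rho> \<cdot>\<^sub>m Y + wZ \<cdot>\<^sub>m X + (\<tau> * wY) \<cdot>\<^sub>m 1\<^sub>m m"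
    using X Y eps by (intro square_mat_eqI)
      (simp_all add: square_mat_entries rho tau[symmetric] field_simps power2_eq_square)
  finally show ?thesis .
qed

lemma qcomm_cycle_of_askey_wilson:
  assumes A: "A \<in> square_mats" and B: "B \<in> square_mats" and q: "q \<noteq> 0"
    and eps: "q - inverse q = \<epsilon>" "\<epsilon> \<noteq> 0" and kappa: "\<kappa> \<noteq> 0"
    and rho: "\<rho> = - (\<kappa> ^ 2)" and tau: "\<tau> * \<epsilon> = \<kappa>"
    and AW1: "qcomm (inverse q) A (qcomm q A B) = \<rho> \<cdot>\<^sub>m B + wC \<cdot>\<^sub>m A + (\<tau> * wB) \<cdot>\<^sub>m 1\<^sub>m m"
    and AW2: "qcomm (inverse q) B (qcomm q B A) = \<rho> \<cdot>\<^sub>m A + wC \<cdot>\<^sub>m B + (\<tau> * wA) \<cdot>\<^sub>m 1\<^sub>m m"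
    and C: "C = inverse \<kappa> \<cdot>\<^sub>m qcomm q B A + (wC / (\<epsilon> * \<kappa>)) \<cdot>\<^sub>m 1\<^sub>m m"
  shows "qcomm q B A = \<kappa> \<cdot>\<^sub>m C + (- wC / \<epsilon>) \<cdot>\<^sub>m 1\<^sub>m m"
    and "qcomm q A C = \<kappa> \<cdot>\<^sub>m B + (- wB / \<epsilon>) \<cdot>\<^sub>m 1\<^sub>m m"
    and "qcomm q C B = \<kappa> \<cdot>\<^sub>m A + (- wA / \<epsilon>) \<cdot>\<^sub>m 1\<^sub>m m"
proof -
  show "qcomm q B A = \<kappa> \<cdot>\<^sub>m C + (- wC / \<epsilon>) \<cdot>\<^sub>m 1\<^sub>m m"
    using A B kappa eps unfolding C
    by (intro square_mat_eqI) (simp_all add: square_mat_entries field_simps)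
  have "qcomm q A C = inverse \<kappa> \<cdot>\<^sub>m qcomm q A (qcomm q B A) + (wC / \<kappa>) \<cdot>\<^sub>m A"
    using A B eps unfolding C by (simp add: qcomm_right_affine)
  also have "\<dots> = inverse \<kappa> \<cdot>\<^sub>m (- (\<rho> \<cdot>\<^sub>m B + wC \<cdot>\<^sub>m A + (\<tau> * wB) \<cdot>\<^sub>m 1\<^sub>m m)) + (wC / \<kappa>) \<cdot>\<^sub>m A"
    by (simp only: qcomm_nested_swap[OF A B q] AW1)
  also have "\<dots> = \<kappa> \<cdot>\<^sub>m B + (- wB / \<epsilon>) \<cdot>\<^sub>m 1\<^sub>m m"
    using A B kappa eps
    by (intro square_mat_eqI) (simp_all add: square_mat_entries rho tau[symmetric] field_simps power2_eq_square)
  finally show "qcomm q A C = \<kappa> \<cdot>\<^sub>m B + (- wB / \<epsilon>) \<cdot>\<^sub>m 1\<^sub>m m" .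
  have "qcomm q C B = inverse \<kappa> \<cdot>\<^sub>m qcomm q (qcomm q B A) B + (wC / \<kappa>) \<cdot>\<^sub>m B"
    using A B eps unfolding C by (simp add: qcomm_left_affine)
  also have "\<dots> = inverse \<kappa> \<cdot>\<^sub>m (- (\<rho> \<cdot>\<^sub>m A + wC \<cdot>\<^sub>m B + (\<tau> * wA) \<cdot>\<^sub>m 1\<^sub>m m)) + (wC / \<kappa>) \<cdot>\<^sub>m B"
    using qcomm_inverse[of "qcomm q B A" B "inverse q"] A B by (simp add: AW2)
  also have "\<dots> = \<kappa> \<cdot>\<^sub>m A + (- wA / \<epsilon>) \<cdot>\<^sub>m 1\<^sub>m m"
    using A B kappa eps
    by (intro square_mat_eqI) (simp_all add: square_mat_entries rho tau[symmetric] field_simps power2_eq_square)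
  finally show "qcomm q C B = \<kappa> \<cdot>\<^sub>m A + (- wA / \<epsilon>) \<cdot>\<^sub>m 1\<^sub>m m" .
qed

end

lemma power_minus_inverse_power_neq_0:
  fixes q :: "'a :: field"
  assumes "q \<noteq> 0" and "q ^ (2 * k) \<noteq> 1"
  shows "q ^ k - inverse q ^ k \<noteq> 0"
proof
  assume "q ^ k - inverse q ^ k = 0"
  then have "q ^ k * q ^ k = 1"
    using assms(1) by (simp add: power_inverse field_simps)
  then show False
    using assms(2) by (simp add: mult_2 power_add)
qed

lemma omega_swap: "omega q r0 n bb cc a b c = omega q r0 n bb cc b a c"
  unfolding omega_def by (simp add: mult.commute)

theorem mainTheorem1:
  fixes q r0 :: complex and n :: nat
    and bb cc :: "label \<Rightarrow> complex"
    and A As :: "complex mat"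
  assumes q_nz: "q \<noteq> 0"
    and q_not_root: "\<forall>k::nat. k > 0 \<longrightarrow> q ^ k \<noteq> 1"
    and r0_nz: "r0 \<noteq> 0"
    and bb_nz: "\<forall>a. bb a \<noteq> 0" and cc_nz: "\<forall>a. cc a \<noteq> 0"
    and bc: "\<forall>a. bb a * cc a = inverse (r0 ^ 2)"
    and A_dim: "A \<in> carrier_mat (n+1) (n+1)"
    and As_dim: "As \<in> carrier_mat (n+1) (n+1)"
    and AW1: "qcomm (inverse q) A (qcomm q A As)
       = (- ((q^2 - inverse q ^ 2)^2 / r0^2)) \<cdot>\<^sub>m As
         + omega q r0 n bb cc Dot Star Diamond \<cdot>\<^sub>m A
         + ((q + inverse q) / r0 * omega q r0 n bb cc Dot Diamond Star) \<cdot>\<^sub>m 1\<^sub>m (n+1)"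
    and AW2: "qcomm (inverse q) As (qcomm q As A)
       = (- ((q^2 - inverse q ^ 2)^2 / r0^2)) \<cdot>\<^sub>m A
         + omega q r0 n bb cc Dot Star Diamond \<cdot>\<^sub>m As
         + ((q + inverse q) / r0 * omega q r0 n bb cc Star Diamond Dot) \<cdot>\<^sub>m 1\<^sub>m (n+1)"
  shows "\<forall>a b c. distinct [a, b, c] \<longrightarrow>
     qcomm (inverse q) (Alab q r0 n bb cc A As a) (qcomm q (Alab q r0 n bb cc A As a) (Alab q r0 n bb cc A As b))
       = (- ((q^2 - inverse q ^ 2)^2 / r0^2)) \<cdot>\<^sub>m Alab q r0 n bb cc A As b
         + omega q r0 n bb cc a b c \<cdot>\<^sub>m Alab q r0 n bb cc A As a
         + ((q + inverse q) / r0 * omega q r0 n bb cc a c b) \<cdot>\<^sub>m 1\<^sub>m (n+1)"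
proof -
  define \<kappa> where "\<kappa> = (q^2 - inverse q ^ 2) / r0"
  have eps: "q - inverse q \<noteq> 0"
    using power_minus_inverse_power_neq_0[of q 1] q_nz q_not_root by simp
  have "q^2 - inverse q ^ 2 \<noteq> 0"
    using power_minus_inverse_power_neq_0[of q 2] q_nz q_not_root by simp
  then have kappa: "\<kappa> \<noteq> 0"
    using r0_nz by (simp add: \<kappa>_def)
  have rho: "- ((q^2 - inverse q ^ 2)^2 / r0^2) = - (\<kappa> ^ 2)"
    by (simp add: \<kappa>_def power_divide)
  have tau: "(q + inverse q) / r0 * (q - inverse q) = \<kappa>"
    by (simp add: \<kappa>_def algebra_simps power2_eq_square)
  have C: "Adiamond q r0 n bb cc A As = inverse \<kappa> \<cdot>\<^sub>m qcomm q As A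
      + (omega q r0 n bb cc Dot Star Diamond / ((q - inverse q) * \<kappa>)) \<cdot>\<^sub>m 1\<^sub>m (n+1)"
    by (simp add: Adiamond_def \<kappa>_def ac_simps)
  note cycle = qcomm_cycle_of_askey_wilson[OF A_dim As_dim q_nz refl eps kappa rho tau AW1 AW2 C]
  have C_dim: "Adiamond q r0 n bb cc A As \<in> carrier_mat (n+1) (n+1)"
    using A_dim As_dim by (simp add: C)
  note AW_direct = askey_wilson_of_qcomm[OF _ _ _ refl eps rho tau]
  note AW_reversed = askey_wilson_of_reversed_qcomm[OF _ _ _ q_nz refl eps rho tau]
  note AW_new =
    AW_direct[OF A_dim C_dim As_dim cycle(2) cycle(1)]
    AW_reversed[OF As_dim C_dim A_dim cycle(3) cycle(1)]
    AW_reversed[OF C_dim A_dim As_dim cycle(2) cycle(3)]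
    AW_direct[OF C_dim As_dim A_dim cycle(3) cycle(2)]
  show ?thesis
    unfolding Alab_def
    by (intro allI impI, case_tac a; case_tac b; case_tac c)
      (simp_all add: AW1 AW2 AW_new omega_swap)
qed

end
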